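(* Let $$J(\mu)=\int_{\max(-\mu,-1)}^{1}\frac{dx}{\sqrt{1-x^2}\sqrt{\mu+x}},\qquad \mu\ge-1.$$ Then there is an absolute constant $C$ such that $|\mu-1|\,|J'(\mu)|\le C\,J(\mu)$ for all $\mu>-1$, $\mu\neq1$.
   Context: $J$ is the kernel of the representation formula for the radial $2+1$-dimensional flat wave equation; it is smooth on $(-1,1)\cup(1,\infty)$. *)

theory Defs
  imports "HOL-Analysis.Analysis"
begin

text \<open>The integral is improper (integrable singularities at endpoints); we use the
  Henstock-Kurzweil integral, which for this nonnegative integrand coincides with the
  Lebesgue integral whenever it is finite.\<close>
definition J :: "real \<Rightarrow> real" where
  "J \<mu> = integral {max (-\<mu>) (-1) .. 1} (\<lambda>x. 1 / (sqrt (1 - x\<^sup>2) * sqrt (\<mu> + x)))"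

end

theory Submission
  imports Defs
begin

text \<open>The substitution \<open>x = m - r cos \<theta>\<close>, where \<open>[m - r, m + r]\<close> is the range of integration,
  absorbs the factor \<open>1 / sqrt (1 - x\<^sup>2)\<close> (together with \<open>1 / sqrt (\<mu> + x)\<close> when \<open>\<mu> < 1\<close>) and
  writes \<open>J \<mu>\<close> as the integral over \<open>[0, pi]\<close> of \<open>1 / sqrt D\<close>, where \<open>D = \<mu> - cos \<theta>\<close> for
  \<open>\<mu> > 1\<close> and \<open>D = (3 - \<mu> - (1 + \<mu>) cos \<theta>) / 2\<close> for \<open>-1 < \<mu> < 1\<close>. In both cases \<open>D\<close> is
  affine in \<open>\<mu>\<close> with \<open>|\<mu> - 1| |\<partial>D/\<partial>\<mu>| \<le> D\<close>, so differentiating under the integral sign,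
  \<open>|\<mu> - 1| |J' \<mu>| \<le> 1/2 \<integral> |\<mu> - 1| |\<partial>D/\<partial>\<mu>| / D\<^sup>3\<^sup>/\<^sup>2 \<le> 1/2 \<integral> 1 / sqrt D = J \<mu> / 2\<close>.\<close>

lemma has_field_derivative_inverse_sqrt_affine:
  fixes A B x :: real
  assumes "0 < A * x + B"
  shows "((\<lambda>x. 1 / sqrt (A * x + B)) has_field_derivative
           - A / (2 * (A * x + B) * sqrt (A * x + B))) (at x within S)"
  using assms
  by (auto intro!: derivative_eq_intros simp: field_simps power2_eq_square)

lemma has_field_derivative_arccos_affine:
  fixes m r x :: real
  assumes "0 < r" "\<bar>x - m\<bar> < r"
  shows "((\<lambda>x. arccos ((m - x) / r)) has_field_derivative 1 / sqrt (r\<^sup>2 - (x - m)\<^sup>2)) (at x)"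
proof -
  have u: "- 1 < (m - x) / r" "(m - x) / r < 1"
    using assms by (auto simp: field_simps abs_less_iff)
  have "r\<^sup>2 - (x - m)\<^sup>2 = r\<^sup>2 * (1 - ((m - x) / r)\<^sup>2)"
    using assms by (simp add: field_simps power2_eq_square)
  then have "sqrt (r\<^sup>2 - (x - m)\<^sup>2) = r * sqrt (1 - ((m - x) / r)\<^sup>2)"
    using assms by (simp add: real_sqrt_mult)
  then show ?thesis
    using u assms
    by (auto intro!: derivative_eq_intros DERIV_arccos[THEN DERIV_chain2] simp: field_simps)
qed

lemma has_integral_cos_substitution:
  fixes f :: "real \<Rightarrow> real"
  assumes r: "0 < r" and f: "continuous_on {0..pi} (\<lambda>\<theta>. f (m - r * cos \<theta>))"
  shows "((\<lambda>x. f x / sqrt (r\<^sup>2 - (x - m)\<^sup>2)) has_integral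
           integral {0..pi} (\<lambda>\<theta>. f (m - r * cos \<theta>))) {m - r..m + r}"
proof -
  define g where "g x = arccos ((m - x) / r)" for x
  have unit: "- 1 \<le> (m - x) / r \<and> (m - x) / r \<le> 1" if "x \<in> {m - r..m + r}" for x
    using that r by (auto simp: field_simps)
  have ends: "g (m - r) = 0" "g (m + r) = pi"
    using r by (simp_all add: g_def)
  have subst: "((\<lambda>x. (1 / sqrt (r\<^sup>2 - (x - m)\<^sup>2)) *\<^sub>R f (m - r * cos (g x))) has_integral
          integral {g (m - r)..g (m + r)} (\<lambda>\<theta>. f (m - r * cos \<theta>))) {m - r..m + r}"
  proof (rule has_integral_substitution_strong[where s = "{m - r, m + r}" and c = 0 and d = pi])
    show "g ` {m - r..m + r} \<subseteq> {0..pi}"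
      using unit by (auto simp: g_def intro!: arccos_lbound arccos_ubound)
    show "continuous_on {m - r..m + r} g"
      unfolding g_def using unit r by (intro continuous_intros) auto
    show "(g has_field_derivative 1 / sqrt (r\<^sup>2 - (x - m)\<^sup>2)) (at x within {m - r..m + r})"
      if "x \<in> {m - r..m + r} - {m - r, m + r}" for x
    proof -
      have "\<bar>x - m\<bar> < r" using that by (auto simp: abs_less_iff)
      then show ?thesis
        unfolding g_def by (rule has_field_derivative_at_within[OF has_field_derivative_arccos_affine[OF r]])
    qed
    show "g (m - r) \<le> g (m + r)" using ends by simp
  qed (use r f in simp_all)
  have inverse: "m - r * cos (g x) = x" if "x \<in> {m - r..m + r}" for x
    using unit[OF that] r by (simp add: g_def)
  show ?thesis
    using subst unfolding ends by (rule has_integral_eq[rotated]) (simp add: inverse)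
qed

lemma J_eq_integral_above_one:
  assumes "1 < \<mu>"
  shows "J \<mu> = integral {0..pi} (\<lambda>\<theta>. 1 / sqrt (\<mu> - cos \<theta>))"
proof -
  have "continuous_on {0..pi} (\<lambda>\<theta>. 1 / sqrt (\<mu> - cos \<theta>))"
  proof (intro continuous_intros ballI)
    fix \<theta> :: real
    have "0 < \<mu> - cos \<theta>" using assms cos_le_one[of \<theta>] by linarith
    then show "sqrt (\<mu> - cos \<theta>) \<noteq> 0" by simp
  qed
  from has_integral_cos_substitution[of 1 "\<lambda>x. 1 / sqrt (\<mu> + x)" 0, simplified, OF this]
  have "((\<lambda>x. 1 / (sqrt (1 - x\<^sup>2) * sqrt (\<mu> + x))) has_integral
          integral {0..pi} (\<lambda>\<theta>. 1 / sqrt (\<mu> - cos \<theta>))) {-1..1}"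
    by (simp add: mult.commute)
  then show ?thesis
    using assms by (simp add: J_def integral_unique)
qed

lemma J_eq_integral_below_one:
  assumes "-1 < \<mu>" "\<mu> < 1"
  shows "J \<mu> = integral {0..pi} (\<lambda>\<theta>. 1 / sqrt ((3 - \<mu> - (1 + \<mu>) * cos \<theta>) / 2))"
proof -
  define m r where "m = (1 - \<mu>) / 2" and "r = (1 + \<mu>) / 2"
  have r: "0 < r" using assms by (simp add: r_def)
  have ends: "m - r = - \<mu>" "m + r = 1"
    by (simp_all add: m_def r_def field_simps)
  have shift: "1 + (m - r * cos \<theta>) = (3 - \<mu> - (1 + \<mu>) * cos \<theta>) / 2" for \<theta>
    by (simp add: m_def r_def field_simps)
  have "continuous_on {0..pi} (\<lambda>\<theta>. 1 / sqrt (1 + (m - r * cos \<theta>)))"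
  proof (intro continuous_intros ballI)
    fix \<theta> :: real
    have "r * cos \<theta> \<le> r" by (rule mult_left_le) (use r in simp_all)
    then have "0 < 1 + (m - r * cos \<theta>)" using assms ends by linarith
    then show "sqrt (1 + (m - r * cos \<theta>)) \<noteq> 0" by simp
  qed
  from has_integral_cos_substitution[of r "\<lambda>x. 1 / sqrt (1 + x)" m, OF r this]
  have "((\<lambda>x. 1 / sqrt (1 + x) / sqrt (r\<^sup>2 - (x - m)\<^sup>2)) has_integral
          integral {0..pi} (\<lambda>\<theta>. 1 / sqrt ((3 - \<mu> - (1 + \<mu>) * cos \<theta>) / 2))) {-\<mu>..1}"
    by (simp only: shift ends)
  moreover have "1 / sqrt (1 + x) / sqrt (r\<^sup>2 - (x - m)\<^sup>2) = 1 / (sqrt (1 - x\<^sup>2) * sqrt (\<mu> + x))"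
    if "x \<in> {-\<mu>..1}" for x
  proof -
    have "r\<^sup>2 - (x - m)\<^sup>2 = (1 - x) * (\<mu> + x)" "1 - x\<^sup>2 = (1 - x) * (1 + x)"
      by (simp_all add: m_def r_def field_simps power2_eq_square)
    then show ?thesis
      using that assms by (simp add: real_sqrt_mult)
  qed
  ultimately have "((\<lambda>x. 1 / (sqrt (1 - x\<^sup>2) * sqrt (\<mu> + x))) has_integral
          integral {0..pi} (\<lambda>\<theta>. 1 / sqrt ((3 - \<mu> - (1 + \<mu>) * cos \<theta>) / 2))) {-\<mu>..1}"
    by (rule has_integral_eq[rotated])
  then show ?thesis
    using assms by (simp add: J_def integral_unique)
qed

lemma has_field_derivative_integral_inverse_sqrt_affine:
  fixes \<alpha> \<beta> :: "real \<Rightarrow> real"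
  assumes S: "open S" "convex S" "\<mu> \<in> S"
    and \<alpha>: "continuous_on {a..b} \<alpha>" and \<beta>: "continuous_on {a..b} \<beta>"
    and pos: "\<And>x t. x \<in> S \<Longrightarrow> t \<in> {a..b} \<Longrightarrow> 0 < \<alpha> t * x + \<beta> t"
  shows "((\<lambda>x. integral {a..b} (\<lambda>t. 1 / sqrt (\<alpha> t * x + \<beta> t))) has_field_derivative
           integral {a..b} (\<lambda>t. - \<alpha> t / (2 * (\<alpha> t * \<mu> + \<beta> t) * sqrt (\<alpha> t * \<mu> + \<beta> t)))) (at \<mu>)"
proof -
  have "continuous_on (S \<times> {a..b}) (\<lambda>p. \<alpha> (snd p))" "continuous_on (S \<times> {a..b}) (\<lambda>p. \<beta> (snd p))"
    by (auto intro!: continuous_on_compose2[OF \<alpha>] continuous_on_compose2[OF \<beta>]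
        continuous_on_snd[OF continuous_on_id])
  then have "continuous_on (S \<times> {a..b}) (\<lambda>(x, t). - \<alpha> t / (2 * (\<alpha> t * x + \<beta> t) * sqrt (\<alpha> t * x + \<beta> t)))"
    unfolding split_beta
  proof (intro continuous_intros ballI)
    fix p :: "real \<times> real"
    assume "p \<in> S \<times> {a..b}"
    then have "0 < \<alpha> (snd p) * fst p + \<beta> (snd p)"
      using pos by (auto simp: mem_Times_iff)
    then show "2 * (\<alpha> (snd p) * fst p + \<beta> (snd p)) * sqrt (\<alpha> (snd p) * fst p + \<beta> (snd p)) \<noteq> 0"
      by simp
  qed
  then have "((\<lambda>x. integral {a..b} (\<lambda>t. 1 / sqrt (\<alpha> t * x + \<beta> t))) has_field_derivative
           integral {a..b} (\<lambda>t. - \<alpha> t / (2 * (\<alpha> t * \<mu> + \<beta> t) * sqrt (\<alpha> t * \<mu> + \<beta> t)))) (at \<mu> within S)"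
    unfolding cbox_interval[symmetric]
  proof (rule leibniz_rule_field_derivative[rotated 2])
    show "(\<lambda>t. 1 / sqrt (\<alpha> t * x + \<beta> t)) integrable_on cbox a b" if "x \<in> S" for x
      using pos[OF that] \<alpha> \<beta> unfolding cbox_interval
      by (intro integrable_continuous_interval continuous_intros) (auto simp: less_imp_neq[symmetric])
    show "((\<lambda>x. 1 / sqrt (\<alpha> t * x + \<beta> t)) has_field_derivative
        - \<alpha> t / (2 * (\<alpha> t * x + \<beta> t) * sqrt (\<alpha> t * x + \<beta> t))) (at x within S)"
      if "x \<in> S" "t \<in> cbox a b" for x t
      using that pos by (intro has_field_derivative_inverse_sqrt_affine) (simp add: cbox_interval)
  qed (use S in auto)
  then show ?thesis
    by (simp only: at_within_open[OF S(3,1)])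
qed

lemma abs_deriv_integral_inverse_sqrt_affine_le:
  fixes \<alpha> \<beta> :: "real \<Rightarrow> real"
  assumes S: "open S" "convex S" "\<mu> \<in> S"
    and \<alpha>: "continuous_on {a..b} \<alpha>" and \<beta>: "continuous_on {a..b} \<beta>"
    and pos: "\<And>x t. x \<in> S \<Longrightarrow> t \<in> {a..b} \<Longrightarrow> 0 < \<alpha> t * x + \<beta> t"
    and F: "\<And>x. x \<in> S \<Longrightarrow> F x = integral {a..b} (\<lambda>t. 1 / sqrt (\<alpha> t * x + \<beta> t))"
    and \<kappa>: "0 \<le> \<kappa>" "\<And>t. t \<in> {a..b} \<Longrightarrow> \<kappa> * \<bar>\<alpha> t\<bar> \<le> \<alpha> t * \<mu> + \<beta> t"
  shows "\<kappa> * \<bar>deriv F \<mu>\<bar> \<le> F \<mu> / 2"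
proof -
  define D where "D t = \<alpha> t * \<mu> + \<beta> t" for t
  have D: "0 < D t" if "t \<in> {a..b}" for t
    using pos[OF S(3) that] by (simp add: D_def)
  have "deriv F \<mu> = integral {a..b} (\<lambda>t. - \<alpha> t / (2 * D t * sqrt (D t)))"
    unfolding D_def
    by (intro DERIV_imp_deriv has_field_derivative_transform_within_open[OF _ S(1,3) F[THEN sym]]
        has_field_derivative_integral_inverse_sqrt_affine[OF S \<alpha> \<beta> pos])
  then have "\<kappa> * \<bar>deriv F \<mu>\<bar> = norm (integral {a..b} (\<lambda>t. \<kappa> * (- \<alpha> t / (2 * D t * sqrt (D t)))))"
    using \<kappa>(1) unfolding integral_mult_right by (simp add: abs_mult)
  also have "\<dots> \<le> integral {a..b} (\<lambda>t. 1 / sqrt (D t) / 2)"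
  proof (rule integral_norm_bound_integral)
    have "continuous_on {a..b} D"
      unfolding D_def using \<alpha> \<beta> by (intro continuous_intros)
    then show "(\<lambda>t. \<kappa> * (- \<alpha> t / (2 * D t * sqrt (D t)))) integrable_on {a..b}"
      "(\<lambda>t. 1 / sqrt (D t) / 2) integrable_on {a..b}"
      using D \<alpha> by (auto intro!: integrable_continuous_interval continuous_intros simp: less_imp_neq[symmetric])
    show "norm (\<kappa> * (- \<alpha> t / (2 * D t * sqrt (D t)))) \<le> 1 / sqrt (D t) / 2" if "t \<in> {a..b}" for t
    proof -
      have "norm (\<kappa> * (- \<alpha> t / (2 * D t * sqrt (D t)))) = \<kappa> * \<bar>\<alpha> t\<bar> / (2 * D t * sqrt (D t))"
        using D[OF that] \<kappa>(1) by (simp add: abs_mult)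
      also have "\<dots> \<le> D t / (2 * D t * sqrt (D t))"
        using D[OF that] \<kappa>(2)[OF that] by (intro divide_right_mono) (auto simp: D_def)
      also have "\<dots> = 1 / sqrt (D t) / 2"
        using D[OF that] by simp
      finally show ?thesis .
    qed
  qed
  also have "\<dots> = F \<mu> / 2"
    using F[OF S(3)] unfolding integral_divide by (simp add: D_def)
  finally show ?thesis .
qed

lemma abs_deriv_J_le_above_one:
  assumes "1 < \<mu>"
  shows "(\<mu> - 1) * \<bar>deriv J \<mu>\<bar> \<le> J \<mu> / 2"
proof (rule abs_deriv_integral_inverse_sqrt_affine_le[where S = "{1<..}" and a = 0 and b = pi
      and \<alpha> = "\<lambda>_. 1" and \<beta> = "\<lambda>\<theta>. - cos \<theta>"])
  show "0 < 1 * x + - cos \<theta>" if "x \<in> {1<..}" for x \<theta> :: real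
    using that cos_le_one[of \<theta>] unfolding greaterThan_iff by linarith
  show "J x = integral {0..pi} (\<lambda>\<theta>. 1 / sqrt (1 * x + - cos \<theta>))" if "x \<in> {1<..}" for x
    using that by (simp add: J_eq_integral_above_one)
  show "(\<mu> - 1) * \<bar>1\<bar> \<le> 1 * \<mu> + - cos \<theta>" for \<theta>
    using cos_le_one[of \<theta>] by simp
qed (use assms in \<open>auto intro!: continuous_intros\<close>)

lemma abs_deriv_J_le_below_one:
  assumes "-1 < \<mu>" "\<mu> < 1"
  shows "(1 - \<mu>) * \<bar>deriv J \<mu>\<bar> \<le> J \<mu> / 2"
proof (rule abs_deriv_integral_inverse_sqrt_affine_le[where S = "{-1<..<1}" and a = 0 and b = pi
      and \<alpha> = "\<lambda>\<theta>. - (1 + cos \<theta>) / 2" and \<beta> = "\<lambda>\<theta>. (3 - cos \<theta>) / 2"])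
  have affine: "(3 - x - (1 + x) * cos \<theta>) / 2 = - (1 + cos \<theta>) / 2 * x + (3 - cos \<theta>) / 2" for x \<theta> :: real
    by (simp add: field_simps)
  show "0 < - (1 + cos \<theta>) / 2 * x + (3 - cos \<theta>) / 2" if "x \<in> {-1<..<1}" for x \<theta> :: real
  proof -
    have "3 - x - (1 + x) * cos \<theta> = (1 - x) * (1 + cos \<theta>) + 2 * (1 - cos \<theta>)"
      by (simp add: algebra_simps)
    moreover have "(1 - x) * (1 - cos \<theta>) \<le> 2 * (1 - cos \<theta>)"
      by (rule mult_right_mono) (use that cos_le_one[of \<theta>] in auto)
    moreover have "(1 - x) * (1 + cos \<theta>) + (1 - x) * (1 - cos \<theta>) = 2 * (1 - x)"
      by (simp add: algebra_simps)
    ultimately have "0 < 3 - x - (1 + x) * cos \<theta>"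
      using that by simp
    then show ?thesis
      unfolding affine[symmetric] by simp
  qed
  show "J x = integral {0..pi} (\<lambda>\<theta>. 1 / sqrt (- (1 + cos \<theta>) / 2 * x + (3 - cos \<theta>) / 2))"
    if "x \<in> {-1<..<1}" for x
    using that by (simp add: J_eq_integral_below_one affine)
  show "(1 - \<mu>) * \<bar>- (1 + cos \<theta>) / 2\<bar> \<le> - (1 + cos \<theta>) / 2 * \<mu> + (3 - cos \<theta>) / 2" for \<theta>
  proof -
    have abs: "\<bar>- (1 + cos \<theta>) / 2\<bar> = (1 + cos \<theta>) / 2"
      using cos_ge_minus_one[of \<theta>] by simp
    have gap: "- (1 + cos \<theta>) / 2 * \<mu> + (3 - cos \<theta>) / 2 - (1 - \<mu>) * ((1 + cos \<theta>) / 2) = 1 - cos \<theta>"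
      by (simp add: field_simps)
    show ?thesis
      unfolding abs using gap cos_le_one[of \<theta>] by linarith
  qed
qed (use assms in \<open>auto intro!: continuous_intros\<close>)

theorem mainTheorem20:
  shows "\<exists>C::real. \<forall>\<mu>::real. \<mu> > -1 \<and> \<mu> \<noteq> 1 \<longrightarrow>
           \<bar>\<mu> - 1\<bar> * \<bar>deriv J \<mu>\<bar> \<le> C * J \<mu>"
proof (intro exI[of _ "1 / 2"] allI impI, elim conjE)
  fix \<mu> :: real
  assume "\<mu> > -1" "\<mu> \<noteq> 1"
  then consider "1 < \<mu>" | "\<mu> < 1" by linarith
  then show "\<bar>\<mu> - 1\<bar> * \<bar>deriv J \<mu>\<bar> \<le> 1 / 2 * J \<mu>"
  proof cases
    case 1
    then show ?thesis using abs_deriv_J_le_above_one by simp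
  next
    case 2
    then show ?thesis using abs_deriv_J_le_below_one \<open>\<mu> > -1\<close> by simp
  qed
qed

end
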